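(* Let $k,n\in\mathbb{N}$ with $k<n$, and let $A\in\mathbb{R}^{k\times k}$ and $B\in\mathbb{R}^{n\times n}$ be symmetric positive definite. Let $\iota_k:\mathbb{R}^k\hookrightarrow\mathbb{R}^n$ be any isometric embedding and set $B^{[\alpha]}:=\iota_k^*B^\alpha\iota_k$ for $\alpha\in\mathbb{R}$. Then for every $\alpha\in\mathbb{R}$ and all $j=1,\dots,k$, $$\lambda_j\big(B^{[\alpha/2]}AB^{[\alpha/2]}\big)\le\lambda_j\big((B^{[\alpha]})^{1/2}A(B^{[\alpha]})^{1/2}\big),$$ where $\lambda_1(\cdot)\le\lambda_2(\cdot)\le\dots$ denote eigenvalues in increasing order (with multiplicity). *)

theory Defs
  imports "Jordan_Normal_Form.Matrix" "Jordan_Normal_Form.Char_Poly" "HOL-Library.Multiset"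
begin

definition spd :: "nat \<Rightarrow> real mat \<Rightarrow> bool" where
  "spd n A \<longleftrightarrow> A \<in> carrier_mat n n \<and> transpose_mat A = A \<and>
     (\<forall>v \<in> carrier_vec n. v \<noteq> 0\<^sub>v n \<longrightarrow> v \<bullet> (A *\<^sub>v v) > 0)"

definition mat_rpow :: "real mat \<Rightarrow> real \<Rightarrow> real mat" where
  "mat_rpow B a = (THE M. M \<in> carrier_mat (dim_row B) (dim_row B) \<and>
     (\<forall>v mu. eigenvector B v mu \<longrightarrow> M *\<^sub>v v = (mu powr a) \<cdot>\<^sub>v v))"

definition isometric_embedding :: "nat \<Rightarrow> nat \<Rightarrow> real mat \<Rightarrow> bool" where
  "isometric_embedding k n \<iota> \<longleftrightarrow> \<iota> \<in> carrier_mat n k \<and> transpose_mat \<iota> * \<iota> = 1\<^sub>m k"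

definition compressed_pow :: "real mat \<Rightarrow> real mat \<Rightarrow> real \<Rightarrow> real mat" where
  "compressed_pow \<iota> B a = transpose_mat \<iota> * mat_rpow B a * \<iota>"

definition eig_asc :: "real mat \<Rightarrow> nat \<Rightarrow> real" where
  "eig_asc M j = sorted_list_of_multiset (proots (char_poly M)) ! (j - 1)"

end

(*
  Put R = A^(1/2), P = B^(alpha/2), C = B^[alpha/2] = iota^T P iota and D = B^[alpha] = iota^T P^2 iota,
  with D = S^2 for S = D^(1/2). Conjugating by the invertible matrices C R and S R shows that
  C A C has the same characteristic polynomial as R C^2 R, and S A S the same as R D R.
  Since iota iota^T is an orthogonal projection, |C y| = |iota^T (P iota y)| <= |P iota y|, i.e.
  C^2 <= D in the Loewner order; hence R C^2 R <= R D R, and Weyl's monotonicity principle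
  (a Courant-Fischer dimension count) compares the ordered eigenvalues one by one.
*)
theory Submission
  imports Defs "Jordan_Normal_Form.Schur_Decomposition"
begin

section \<open>Vectors, quadratic forms and diagonal matrices\<close>

lemma conjugate_real_vec [simp]: "conjugate (v :: real vec) = v"
  by (auto simp: conjugate_vec_def)

lemma real_scalar_prod_self_ge_0: "0 \<le> (v :: real vec) \<bullet> v"
  using conjugate_square_ge_0_vec[of v] by simp

lemma real_scalar_prod_self_gt_0_iff:
  "(v :: real vec) \<in> carrier_vec n \<Longrightarrow> 0 < v \<bullet> v \<longleftrightarrow> v \<noteq> 0\<^sub>v n"
  using conjugate_square_greater_0_vec[of v n] by simp

lemma scalar_prod_mult_mat_vec_transpose:
  fixes A :: "real mat"
  assumes "A \<in> carrier_mat n m" "x \<in> carrier_vec m" "y \<in> carrier_vec n"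
  shows "(A *\<^sub>v x) \<bullet> y = x \<bullet> (transpose_mat A *\<^sub>v y)"
  using transpose_vec_mult_scalar[OF assms] assms
  by (metis comm_scalar_prod mult_mat_vec_carrier transpose_carrier_mat)

lemma quadratic_form_transpose_mult_self:
  fixes Z :: "real mat"
  assumes Z: "Z \<in> carrier_mat m k" and x: "x \<in> carrier_vec k"
  shows "x \<bullet> ((transpose_mat Z * Z) *\<^sub>v x) = (Z *\<^sub>v x) \<bullet> (Z *\<^sub>v x)"
  using scalar_prod_mult_mat_vec_transpose[OF Z x, of "Z *\<^sub>v x"] Z x by simp

lemma transpose_congruence:
  fixes F R :: "real mat"
  assumes F: "F \<in> carrier_mat n n" and R: "R \<in> carrier_mat n k"
  shows "transpose_mat (transpose_mat R * F * R) = transpose_mat R * transpose_mat F * R"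
proof -
  have "transpose_mat (transpose_mat R * F * R) = transpose_mat R * transpose_mat (transpose_mat R * F)"
    by (rule transpose_mult) (use F R in auto)
  also have "transpose_mat (transpose_mat R * F) = transpose_mat F * R"
    using transpose_mult[of "transpose_mat R" k n F n] F R by simp
  finally show ?thesis using F R by (simp add: assoc_mult_mat[of _ k n _ n _ k])
qed

lemma quadratic_form_congruence:
  fixes F R :: "real mat"
  assumes F: "F \<in> carrier_mat n n" and R: "R \<in> carrier_mat n k" and x: "x \<in> carrier_vec k"
  shows "x \<bullet> ((transpose_mat R * F * R) *\<^sub>v x) = (R *\<^sub>v x) \<bullet> (F *\<^sub>v (R *\<^sub>v x))"
proof -
  have "(transpose_mat R * F * R) *\<^sub>v x = transpose_mat R *\<^sub>v (F *\<^sub>v (R *\<^sub>v x))"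
    using F R x by (simp add: assoc_mult_mat_vec[of _ k n _ k] assoc_mult_mat_vec[of _ k n _ n])
  then show ?thesis
    using scalar_prod_mult_mat_vec_transpose[OF R x, of "F *\<^sub>v (R *\<^sub>v x)"] F R x by simp
qed

lemma mult_mat_vec_unit_vec:
  fixes A :: "real mat"
  assumes "A \<in> carrier_mat n m" "i < m"
  shows "A *\<^sub>v unit_vec m i = col A i"
  using col_mult2[OF assms(1) one_carrier_mat assms(2)] assms by simp

lemma mat_diag_mult_vec:
  fixes f :: "nat \<Rightarrow> real"
  assumes c: "c \<in> carrier_vec n"
  shows "mat_diag n f *\<^sub>v c = vec n (\<lambda>i. f i * c $ i)"
proof (rule eq_vecI)
  fix i assume "i < dim_vec (vec n (\<lambda>i. f i * c $ i))"
  hence i: "i < n" by simp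
  have "(mat_diag n f *\<^sub>v c) $ i = (\<Sum>j\<in>{0..<n}. (if i = j then f j else 0) * c $ j)"
    using i c by (simp add: mat_diag_def mult_mat_vec_def scalar_prod_def)
  also have "\<dots> = (\<Sum>j\<in>{0..<n}. if j = i then f i * c $ j else 0)"
    by (rule sum.cong) auto
  finally show "(mat_diag n f *\<^sub>v c) $ i = vec n (\<lambda>i. f i * c $ i) $ i"
    using i by simp
qed (use c in \<open>auto simp: mat_diag_def\<close>)

lemma quadratic_form_mat_diag:
  fixes f :: "nat \<Rightarrow> real"
  assumes "c \<in> carrier_vec n"
  shows "c \<bullet> (mat_diag n f *\<^sub>v c) = (\<Sum>i<n. f i * (c $ i)\<^sup>2)"
  using assms by (simp add: mat_diag_mult_vec scalar_prod_def power2_eq_square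
      algebra_simps atLeast0LessThan)

lemma transpose_mat_diag [simp]: "transpose_mat (mat_diag n f) = mat_diag n f"
  by (rule eq_matI) (auto simp: mat_diag_def)

lemma mat_diag_cong: "(\<And>i. i < n \<Longrightarrow> f i = g i) \<Longrightarrow> mat_diag n f = mat_diag n g"
  by (rule eq_matI) (auto simp: mat_diag_def)

lemma mat_diag_Suc:
  "mat_diag (Suc m) (case_nat l d) = four_block_mat (mat 1 1 (\<lambda>_. l)) (0\<^sub>m 1 m) (0\<^sub>m m 1) (mat_diag m d)"
  by (rule eq_matI) (auto simp: mat_diag_def split: nat.split)

lemma char_poly_mat_diag: "char_poly (mat_diag n d) = (\<Prod>a\<leftarrow>map d [0..<n]. [:- a, 1:])"
proof -
  have "char_poly (mat_diag n d) = (\<Prod>a\<leftarrow>diag_mat (mat_diag n d). [:- a, 1:])"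
    by (rule char_poly_upper_triangular[of _ n]) (auto simp: upper_triangular_def mat_diag_def)
  also have "diag_mat (mat_diag n d) = map d [0..<n]"
    by (rule nth_equalityI) (auto simp: diag_mat_def mat_diag_def)
  finally show ?thesis .
qed

lemma char_poly_mult_commute:
  fixes X Y X' :: "'a :: field mat"
  assumes X: "X \<in> carrier_mat k k" and Y: "Y \<in> carrier_mat k k" and X': "X' \<in> carrier_mat k k"
    and inv: "X' * X = 1\<^sub>m k"
  shows "char_poly (X * Y) = char_poly (Y * X)"
proof (rule char_poly_similar, rule similar_matI[of _ _ X X' k])
  have "X * X' = 1\<^sub>m k" by (rule mat_mult_left_right_inverse[OF X' X inv])
  then show "X * Y = X * (Y * X) * X'" using X Y X' by (simp add: assoc_mult_mat[of _ k k _ k _ k])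
qed (use X Y X' inv mat_mult_left_right_inverse[OF X' X inv] in auto)

section \<open>Isometric embeddings\<close>

lemma isometric_embedding_carrier:
  "isometric_embedding k n \<iota> \<Longrightarrow> \<iota> \<in> carrier_mat n k"
  unfolding isometric_embedding_def by simp

lemma isometric_embedding_transpose_mult:
  "isometric_embedding k n \<iota> \<Longrightarrow> transpose_mat \<iota> * \<iota> = 1\<^sub>m k"
  unfolding isometric_embedding_def by simp

lemma isometric_embedding_mult_transpose:
  assumes "isometric_embedding n n U"
  shows "U * transpose_mat U = 1\<^sub>m n"
  using assms mat_mult_left_right_inverse[of "transpose_mat U" n U]
  unfolding isometric_embedding_def by auto

lemma isometric_embedding_transpose:
  "isometric_embedding n n U \<Longrightarrow> isometric_embedding n n (transpose_mat U)"
  using isometric_embedding_mult_transpose[of n U]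
  unfolding isometric_embedding_def by auto

lemma isometric_embedding_mult:
  assumes U: "isometric_embedding m n U" and V: "isometric_embedding k m V"
  shows "isometric_embedding k n (U * V)"
proof -
  have Uc: "U \<in> carrier_mat n m" and Vc: "V \<in> carrier_mat m k"
    using U V by (auto dest: isometric_embedding_carrier)
  have "transpose_mat (U * V) * (U * V) = transpose_mat V * ((transpose_mat U * U) * V)"
    using Uc Vc by (simp add: transpose_mult[OF Uc Vc] assoc_mult_mat[of _ k m _ n _ k]
        assoc_mult_mat[of _ m n _ m _ k])
  also have "\<dots> = 1\<^sub>m k"
    using Vc isometric_embedding_transpose_mult[OF U] isometric_embedding_transpose_mult[OF V] by simp
  finally show ?thesis unfolding isometric_embedding_def using Uc Vc by auto
qed

lemma isometric_embedding_inner: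
  assumes \<iota>: "isometric_embedding k n \<iota>" and x: "x \<in> carrier_vec k" and y: "y \<in> carrier_vec k"
  shows "(\<iota> *\<^sub>v x) \<bullet> (\<iota> *\<^sub>v y) = x \<bullet> y"
proof -
  have \<iota>c: "\<iota> \<in> carrier_mat n k" by (rule isometric_embedding_carrier[OF \<iota>])
  have "(\<iota> *\<^sub>v x) \<bullet> (\<iota> *\<^sub>v y) = x \<bullet> ((transpose_mat \<iota> * \<iota>) *\<^sub>v y)"
    using scalar_prod_mult_mat_vec_transpose[OF \<iota>c x, of "\<iota> *\<^sub>v y"] \<iota>c y by simp
  then show ?thesis using isometric_embedding_transpose_mult[OF \<iota>] y by simp
qed

lemma isometric_embedding_col_inner:
  assumes "isometric_embedding n n U" "i < n"
  shows "col U i \<bullet> col U i = 1"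
  using isometric_embedding_inner[OF assms(1), of "unit_vec n i" "unit_vec n i"] assms
    isometric_embedding_carrier[OF assms(1)] by (simp add: mult_mat_vec_unit_vec)

lemma isometric_embedding_transpose_norm_le:
  fixes \<iota> :: "real mat"
  assumes \<iota>: "isometric_embedding k n \<iota>" and z: "z \<in> carrier_vec n"
  shows "(transpose_mat \<iota> *\<^sub>v z) \<bullet> (transpose_mat \<iota> *\<^sub>v z) \<le> z \<bullet> z"
proof -
  have \<iota>c: "\<iota> \<in> carrier_mat n k" by (rule isometric_embedding_carrier[OF \<iota>])
  define w where "w = transpose_mat \<iota> *\<^sub>v z"
  have w: "w \<in> carrier_vec k" using \<iota>c z by (simp add: w_def)
  have \<iota>w: "\<iota> *\<^sub>v w \<in> carrier_vec n" using \<iota>c w by simp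
  have zw: "z \<bullet> (\<iota> *\<^sub>v w) = w \<bullet> w" "(\<iota> *\<^sub>v w) \<bullet> z = w \<bullet> w"
    using scalar_prod_mult_mat_vec_transpose[OF \<iota>c w z] comm_scalar_prod[OF z \<iota>w]
    by (simp_all add: w_def)
  have "0 \<le> (z - \<iota> *\<^sub>v w) \<bullet> (z - \<iota> *\<^sub>v w)" by (rule real_scalar_prod_self_ge_0)
  also have "\<dots> = z \<bullet> z - w \<bullet> w"
    using z \<iota>w zw isometric_embedding_inner[OF \<iota> w w]
    by (simp add: minus_scalar_prod_distrib[of _ n] scalar_prod_minus_distrib[of _ n])
  finally show ?thesis unfolding w_def by simp
qed

lemma isometric_embedding_transpose_mult_cancel:
  assumes \<iota>: "isometric_embedding k n \<iota>" and X: "X \<in> carrier_mat k j"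
  shows "transpose_mat \<iota> * (\<iota> * X) = X"
proof -
  have \<iota>c: "\<iota> \<in> carrier_mat n k" by (rule isometric_embedding_carrier[OF \<iota>])
  have "transpose_mat \<iota> * (\<iota> * X) = (transpose_mat \<iota> * \<iota>) * X"
    using \<iota>c X by (simp add: assoc_mult_mat[of _ k n _ k _ j])
  then show ?thesis using isometric_embedding_transpose_mult[OF \<iota>] X by simp
qed

lemma isometric_embedding_transpose_mult_vec_cancel:
  assumes \<iota>: "isometric_embedding k n \<iota>" and x: "x \<in> carrier_vec k"
  shows "transpose_mat \<iota> *\<^sub>v (\<iota> *\<^sub>v x) = x"
proof -
  have \<iota>c: "\<iota> \<in> carrier_mat n k" by (rule isometric_embedding_carrier[OF \<iota>])
  have "transpose_mat \<iota> *\<^sub>v (\<iota> *\<^sub>v x) = (transpose_mat \<iota> * \<iota>) *\<^sub>v x"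
    using \<iota>c x by (simp add: assoc_mult_mat_vec[of _ k n _ k])
  then show ?thesis using isometric_embedding_transpose_mult[OF \<iota>] x by simp
qed

lemma isometry_mult_transpose_cancel:
  "isometric_embedding n n U \<Longrightarrow> X \<in> carrier_mat n j \<Longrightarrow> U * (transpose_mat U * X) = X"
  using isometric_embedding_transpose_mult_cancel[OF isometric_embedding_transpose] by simp

lemma isometry_mult_transpose_vec_cancel:
  "isometric_embedding n n U \<Longrightarrow> x \<in> carrier_vec n \<Longrightarrow> U *\<^sub>v (transpose_mat U *\<^sub>v x) = x"
  using isometric_embedding_transpose_mult_vec_cancel[OF isometric_embedding_transpose] by simp

lemma isometric_embedding_four_block:
  assumes V: "isometric_embedding m m V"
  shows "isometric_embedding (Suc m) (Suc m) (four_block_mat (1\<^sub>m 1) (0\<^sub>m 1 m) (0\<^sub>m m 1) V)"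
    (is "isometric_embedding _ _ ?W")
proof -
  have Vc: "V \<in> carrier_mat m m" by (rule isometric_embedding_carrier[OF V])
  have Vt: "transpose_mat V \<in> carrier_mat m m" using Vc by simp
  have c1: "1\<^sub>m 1 \<in> carrier_mat 1 1" and z1: "0\<^sub>m 1 m \<in> carrier_mat 1 m"
    and z2: "0\<^sub>m m 1 \<in> carrier_mat m 1" by auto
  have "transpose_mat ?W * ?W
      = four_block_mat (1\<^sub>m 1) (0\<^sub>m 1 m) (0\<^sub>m m 1) (transpose_mat V) * ?W"
    using transpose_four_block_mat[OF c1 z1 z2 Vc] by simp
  also have "\<dots> = four_block_mat (1\<^sub>m 1) (0\<^sub>m 1 m) (0\<^sub>m m 1) (transpose_mat V * V)"
    by (subst mult_four_block_mat[OF c1 z1 z2 Vt c1 z1 z2 Vc]) (use Vc Vt in simp)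
  also have "\<dots> = 1\<^sub>m (Suc m)"
    unfolding isometric_embedding_transpose_mult[OF V] by (rule eq_matI) auto
  finally show ?thesis unfolding isometric_embedding_def using Vc by auto
qed

lemma isometric_embedding_extend:
  fixes u :: "real vec"
  assumes u: "u \<in> carrier_vec n" and uu: "u \<bullet> u = 1"
  shows "\<exists>U. isometric_embedding n n U \<and> col U 0 = u"
proof -
  have u0: "u \<noteq> 0\<^sub>v n" using uu u by auto
  have n: "n \<noteq> 0" using u0 u by (auto intro!: eq_vecI)
  interpret cof_vec_space n "TYPE(real)" .
  define b where "b = basis_completion u"
  define ws where "ws = gram_schmidt n b"
  from basis_completion[OF u u0, folded b_def]
  have dist_b: "distinct b" and indep: "\<not> lin_dep (set b)" and b: "set b \<subseteq> carrier_vec n"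
    and hdb: "hd b = u" and len_b: "length b = n" by auto
  from hdb len_b n obtain vs where bv: "b = u # vs" by (cases b) auto
  from gram_schmidt_result[OF b dist_b indep refl, folded ws_def]
  have ws: "set ws \<subseteq> carrier_vec n" "corthogonal ws" "length ws = n"
    by (auto simp: len_b)
  have ws0: "ws ! 0 = u"
    using gram_schmidt_hd[OF u, of vs, folded bv ws_def] ws(3) n by (cases ws) auto
  define us where "us = map (\<lambda>w. (1 / sqrt (w \<bullet> w)) \<cdot>\<^sub>v w) ws"
  have us: "length us = n" "set us \<subseteq> carrier_vec n" using ws by (auto simp: us_def)
  have wpos: "0 < ws ! i \<bullet> ws ! i" if "i < n" for i
    using corthogonalD[OF ws(2), of i i] that ws(3) real_scalar_prod_self_ge_0[of "ws ! i"] by auto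
  have us_inner: "us ! i \<bullet> us ! j = (if i = j then 1 else 0)" if ij: "i < n" "j < n" for i j
  proof -
    have "ws ! i \<in> carrier_vec n" "ws ! j \<in> carrier_vec n" using ws ij by auto
    then have "us ! i \<bullet> us ! j
        = (1 / sqrt (ws ! i \<bullet> ws ! i)) * (1 / sqrt (ws ! j \<bullet> ws ! j)) * (ws ! i \<bullet> ws ! j)"
      using ij ws by (simp add: us_def)
    then show ?thesis
      using wpos[OF ij(1)] corthogonalD[OF ws(2), of i j] ij ws(3) by (auto simp: field_simps)
  qed
  define U where "U = mat_of_cols n us"
  have U: "U \<in> carrier_mat n n" unfolding U_def using us by auto
  have colU: "col U i = us ! i" if "i < n" for i
    unfolding U_def using that us by (simp add: col_mat_of_cols subset_code(1))
  have "transpose_mat U * U = 1\<^sub>m n"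
    by (rule eq_matI) (use U in \<open>auto simp: colU us_inner\<close>)
  moreover have "col U 0 = u"
    using colU[of 0] n ws0 uu ws(3) by (simp add: us_def)
  ultimately show ?thesis using U unfolding isometric_embedding_def by blast
qed

lemma char_poly_isometry_congruence:
  fixes M U :: "real mat"
  assumes U: "isometric_embedding n n U" and M: "M \<in> carrier_mat n n"
  shows "char_poly (transpose_mat U * M * U) = char_poly M"
proof (rule char_poly_similar, rule similar_matI[of _ _ "transpose_mat U" U n])
  show "transpose_mat U * M * U = transpose_mat U * M * U" ..
qed (use isometric_embedding_carrier[OF U] isometric_embedding_transpose_mult[OF U]
      isometric_embedding_mult_transpose[OF U] M in auto)

section \<open>The spectral theorem for real symmetric matrices\<close>

lemma complex_eigenvector_Re_Im:
  fixes M :: "real mat"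
  assumes M: "M \<in> carrier_mat n n" and v: "v \<in> carrier_vec n"
    and Mv: "map_mat complex_of_real M *\<^sub>v v = z \<cdot>\<^sub>v v"
  defines "x \<equiv> vec n (\<lambda>i. Re (v $ i))" and "y \<equiv> vec n (\<lambda>i. Im (v $ i))"
  shows "M *\<^sub>v x = Re z \<cdot>\<^sub>v x + (- Im z) \<cdot>\<^sub>v y" and "M *\<^sub>v y = Re z \<cdot>\<^sub>v y + Im z \<cdot>\<^sub>v x"
proof -
  have comp: "(\<Sum>j = 0..<n. complex_of_real (M $$ (i, j)) * v $ j) = z * v $ i" if i: "i < n" for i
  proof -
    have "(map_mat complex_of_real M *\<^sub>v v) $ i = z * v $ i" using Mv i v by simp
    then show ?thesis using i M v by (simp add: mult_mat_vec_def scalar_prod_def row_def)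
  qed
  show "M *\<^sub>v x = Re z \<cdot>\<^sub>v x + (- Im z) \<cdot>\<^sub>v y"
  proof (rule eq_vecI)
    fix i assume "i < dim_vec (Re z \<cdot>\<^sub>v x + (- Im z) \<cdot>\<^sub>v y)"
    then have i: "i < n" by (simp add: x_def y_def)
    have "(\<Sum>j = 0..<n. M $$ (i, j) * Re (v $ j)) = Re z * Re (v $ i) - Im z * Im (v $ i)"
      using arg_cong[OF comp[OF i], of Re] by (simp add: Re_sum)
    then show "(M *\<^sub>v x) $ i = (Re z \<cdot>\<^sub>v x + (- Im z) \<cdot>\<^sub>v y) $ i" using i M
      by (simp add: x_def y_def mult_mat_vec_def scalar_prod_def row_def)
  qed (use M in \<open>auto simp: x_def y_def\<close>)
  show "M *\<^sub>v y = Re z \<cdot>\<^sub>v y + Im z \<cdot>\<^sub>v x"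
  proof (rule eq_vecI)
    fix i assume "i < dim_vec (Re z \<cdot>\<^sub>v y + Im z \<cdot>\<^sub>v x)"
    then have i: "i < n" by (simp add: x_def y_def)
    have "(\<Sum>j = 0..<n. M $$ (i, j) * Im (v $ j)) = Re z * Im (v $ i) + Im z * Re (v $ i)"
      using arg_cong[OF comp[OF i], of Im] by (simp add: Im_sum)
    then show "(M *\<^sub>v y) $ i = (Re z \<cdot>\<^sub>v y + Im z \<cdot>\<^sub>v x) $ i" using i M
      by (simp add: x_def y_def mult_mat_vec_def scalar_prod_def row_def)
  qed (use M in \<open>auto simp: x_def y_def\<close>)
qed

lemma real_symmetric_has_eigenvalue:
  fixes M :: "real mat"
  assumes M: "M \<in> carrier_mat n n" and sym: "transpose_mat M = M" and n: "0 < n"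
  shows "\<exists>l. eigenvalue M l"
proof -
  define Mc where "Mc = map_mat complex_of_real M"
  have Mc: "Mc \<in> carrier_mat n n" using M by (simp add: Mc_def)
  from char_poly_factorized[OF Mc] obtain as where
    cp: "char_poly Mc = (\<Prod>a\<leftarrow>as. [:- a, 1:])" and las: "length as = n" by auto
  have "poly (char_poly Mc) (as ! 0) = 0" unfolding cp poly_prod_list
    by (subst prod_list_zero_iff) (use las n in auto)
  then obtain v z where "eigenvector Mc v z"
    using eigenvalue_root_char_poly[OF Mc] unfolding eigenvalue_def by blast
  then have v: "v \<in> carrier_vec n" and v0: "v \<noteq> 0\<^sub>v n" and Mv: "Mc *\<^sub>v v = z \<cdot>\<^sub>v v"
    unfolding eigenvector_def using Mc by auto
  define x where "x = vec n (\<lambda>i. Re (v $ i))"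
  define y where "y = vec n (\<lambda>i. Im (v $ i))"
  have x: "x \<in> carrier_vec n" and y: "y \<in> carrier_vec n" by (auto simp: x_def y_def)
  note Mx = complex_eigenvector_Re_Im(1)[OF M v Mv[unfolded Mc_def], folded x_def y_def]
  note My = complex_eigenvector_Re_Im(2)[OF M v Mv[unfolded Mc_def], folded x_def y_def]
  have xy0: "x \<noteq> 0\<^sub>v n \<or> y \<noteq> 0\<^sub>v n"
  proof (rule ccontr)
    assume "\<not> ?thesis"
    then have "x $ i = 0" "y $ i = 0" if "i < n" for i using that by auto
    then have "v = 0\<^sub>v n" using v by (intro eq_vecI) (auto simp: x_def y_def complex_eq_iff)
    with v0 show False by simp
  qed
  \<comment> \<open>Symmetry of \<open>M\<close> forces the imaginary part of the eigenvalue to vanish.\<close>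
  have "(M *\<^sub>v x) \<bullet> y = x \<bullet> (M *\<^sub>v y)"
    using scalar_prod_mult_mat_vec_transpose[OF M x y] sym by simp
  then have "Re z * (x \<bullet> y) + (- Im z) * (y \<bullet> y) = Re z * (x \<bullet> y) + Im z * (x \<bullet> x)"
    unfolding Mx My using x y
    by (simp add: add_scalar_prod_distrib[of _ n] scalar_prod_add_distrib[of _ n] comm_scalar_prod[of x n y])
  then have "Im z * (x \<bullet> x + y \<bullet> y) = 0" by (simp add: algebra_simps)
  moreover have "0 < x \<bullet> x + y \<bullet> y"
    using xy0 real_scalar_prod_self_gt_0_iff[OF x] real_scalar_prod_self_gt_0_iff[OF y]
      real_scalar_prod_self_ge_0[of x] real_scalar_prod_self_ge_0[of y] by linarith
  ultimately have "Im z = 0" by simp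
  then have "M *\<^sub>v x = Re z \<cdot>\<^sub>v x" "M *\<^sub>v y = Re z \<cdot>\<^sub>v y"
    unfolding Mx My using x y by (auto intro!: eq_vecI)
  with xy0 have "eigenvector M x (Re z) \<or> eigenvector M y (Re z)"
    unfolding eigenvector_def using M x y by auto
  then show ?thesis unfolding eigenvalue_def by auto
qed

lemma symmetric_first_col_four_block:
  fixes T :: "real mat"
  assumes T: "T \<in> carrier_mat (Suc m) (Suc m)" and symT: "transpose_mat T = T"
    and colT: "col T 0 = l \<cdot>\<^sub>v unit_vec (Suc m) 0"
  defines "M' \<equiv> mat m m (\<lambda>(i, j). T $$ (Suc i, Suc j))"
  shows "transpose_mat M' = M'"
    and "T = four_block_mat (mat 1 1 (\<lambda>_. l)) (0\<^sub>m 1 m) (0\<^sub>m m 1) M'"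
proof -
  have T_sym: "T $$ (j, i) = T $$ (i, j)" if "i < Suc m" "j < Suc m" for i j
    using arg_cong[OF symT, of "\<lambda>A. A $$ (i, j)"] T that by simp
  have Ti0: "T $$ (i, 0) = (if i = 0 then l else 0)" if "i < Suc m" for i
    using arg_cong[OF colT, of "\<lambda>w. w $ i"] T that by simp
  have T0j: "T $$ (0, j) = (if j = 0 then l else 0)" if "j < Suc m" for j
    using Ti0[OF that] T_sym[OF that, of 0] by simp
  show "transpose_mat M' = M'"
    using T_sym by (intro eq_matI) (auto simp: M'_def)
  show "T = four_block_mat (mat 1 1 (\<lambda>_. l)) (0\<^sub>m 1 m) (0\<^sub>m m 1) M'"
  proof (rule eq_matI)
    fix i j assume "i < dim_row (four_block_mat (mat 1 1 (\<lambda>_. l)) (0\<^sub>m 1 m) (0\<^sub>m m 1) M')"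
      and "j < dim_col (four_block_mat (mat 1 1 (\<lambda>_. l)) (0\<^sub>m 1 m) (0\<^sub>m m 1) M')"
    then have ij: "i < Suc m" "j < Suc m" by (auto simp: M'_def)
    show "T $$ (i, j) = four_block_mat (mat 1 1 (\<lambda>_. l)) (0\<^sub>m 1 m) (0\<^sub>m m 1) M' $$ (i, j)"
    proof (cases "i = 0")
      case True
      then show ?thesis using ij T0j[of j] by (simp add: M'_def)
    next
      case False
      then show ?thesis using ij Ti0[of i] by (cases j) (auto simp: M'_def)
    qed
  qed (use T in \<open>auto simp: M'_def\<close>)
qed

lemma symmetric_deflation:
  fixes M :: "real mat"
  assumes M: "M \<in> carrier_mat (Suc m) (Suc m)" and symM: "transpose_mat M = M"
    and u: "u \<in> carrier_vec (Suc m)" and uu: "u \<bullet> u = 1" and Mu: "M *\<^sub>v u = l \<cdot>\<^sub>v u"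
  shows "\<exists>U M'. isometric_embedding (Suc m) (Suc m) U \<and> M' \<in> carrier_mat m m
    \<and> transpose_mat M' = M'
    \<and> transpose_mat U * M * U = four_block_mat (mat 1 1 (\<lambda>_. l)) (0\<^sub>m 1 m) (0\<^sub>m m 1) M'"
proof -
  let ?n = "Suc m"
  obtain U where U: "isometric_embedding ?n ?n U" and colU: "col U 0 = u"
    using isometric_embedding_extend[OF u uu] by blast
  have Uc: "U \<in> carrier_mat ?n ?n" by (rule isometric_embedding_carrier[OF U])
  define T where "T = transpose_mat U * M * U"
  have T: "T \<in> carrier_mat ?n ?n" unfolding T_def using Uc M by auto
  have symT: "transpose_mat T = T"
    unfolding T_def transpose_congruence[OF M Uc] symM ..
  have e0: "unit_vec ?n 0 \<in> carrier_vec ?n" by simp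
  have Ue0: "U *\<^sub>v unit_vec ?n 0 = u" using mult_mat_vec_unit_vec[OF Uc] colU by simp
  have "T *\<^sub>v unit_vec ?n 0 = transpose_mat U *\<^sub>v (M *\<^sub>v u)"
    unfolding T_def Ue0[symmetric] using Uc M
    by (simp add: assoc_mult_mat_vec[of _ ?n ?n _ ?n])
  also have "\<dots> = l \<cdot>\<^sub>v (transpose_mat U *\<^sub>v (U *\<^sub>v unit_vec ?n 0))"
    unfolding Mu Ue0 using Uc u by (simp add: mult_mat_vec)
  finally have colT: "col T 0 = l \<cdot>\<^sub>v unit_vec ?n 0"
    using isometric_embedding_transpose_mult_vec_cancel[OF U e0] mult_mat_vec_unit_vec[OF T] by simp
  have "mat m m (\<lambda>(i, j). T $$ (Suc i, Suc j)) \<in> carrier_mat m m" by simp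
  then show ?thesis
    using symmetric_first_col_four_block[OF T symT colT] U unfolding T_def by blast
qed

lemma real_symmetric_min_unit_eigenvector:
  fixes M :: "real mat"
  assumes M: "M \<in> carrier_mat n n" and symM: "transpose_mat M = M" and n: "0 < n"
  obtains u l where "u \<in> carrier_vec n" "u \<bullet> u = 1" "M *\<^sub>v u = l \<cdot>\<^sub>v u"
    "\<And>x. poly (char_poly M) x = 0 \<Longrightarrow> l \<le> x"
proof -
  define R where "R = {x. poly (char_poly M) x = 0}"
  have "char_poly M \<noteq> 0" using degree_monic_char_poly[OF M] by auto
  then have finR: "finite R" unfolding R_def by (rule poly_roots_finite)
  obtain l where "eigenvalue M l" using real_symmetric_has_eigenvalue[OF M symM n] by auto
  then have "l \<in> R" unfolding R_def using eigenvalue_root_char_poly[OF M] by auto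
  with finR have "Min R \<in> R" by (intro Min_in) auto
  then obtain u0 where "eigenvector M u0 (Min R)"
    using eigenvalue_root_char_poly[OF M] unfolding R_def eigenvalue_def by auto
  then have u0: "u0 \<in> carrier_vec n" "u0 \<noteq> 0\<^sub>v n" and Mu0: "M *\<^sub>v u0 = Min R \<cdot>\<^sub>v u0"
    unfolding eigenvector_def using M by auto
  have pos: "0 < u0 \<bullet> u0" using real_scalar_prod_self_gt_0_iff[OF u0(1)] u0(2) by simp
  define u where "u = (1 / sqrt (u0 \<bullet> u0)) \<cdot>\<^sub>v u0"
  have "u \<in> carrier_vec n" using u0 by (simp add: u_def)
  moreover have "u \<bullet> u = 1" using u0 pos by (simp add: u_def field_simps)
  moreover have "M *\<^sub>v u = Min R \<cdot>\<^sub>v u" unfolding u_def using mult_mat_vec[OF M u0(1)] Mu0 u0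
    by (simp add: smult_smult_assoc mult.commute)
  moreover have "Min R \<le> x" if "poly (char_poly M) x = 0" for x
    using Min_le[OF finR] that unfolding R_def by blast
  ultimately show ?thesis by (rule that)
qed

definition spectral_decomposition :: "nat \<Rightarrow> real mat \<Rightarrow> real mat \<Rightarrow> (nat \<Rightarrow> real) \<Rightarrow> bool"
  where "spectral_decomposition n M U d \<longleftrightarrow>
    isometric_embedding n n U \<and> M = U * mat_diag n d * transpose_mat U"

lemma isometry_conjugation_eq_iff:
  fixes M D U :: "real mat"
  assumes U: "isometric_embedding n n U" and M: "M \<in> carrier_mat n n" and D: "D \<in> carrier_mat n n"
  shows "M = U * D * transpose_mat U \<longleftrightarrow> transpose_mat U * M * U = D"
proof -
  have Uc: "U \<in> carrier_mat n n" by (rule isometric_embedding_carrier[OF U])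
  have "transpose_mat U * (U * D * transpose_mat U) * U = D"
    using Uc D isometric_embedding_transpose_mult_cancel[OF U D] isometric_embedding_transpose_mult[OF U]
    by (simp add: assoc_mult_mat[of _ n n _ n _ n])
  moreover have "U * (transpose_mat U * M * U) * transpose_mat U = M"
    using Uc M isometry_mult_transpose_cancel[OF U M] isometric_embedding_mult_transpose[OF U]
    by (simp add: assoc_mult_mat[of _ n n _ n _ n])
  ultimately show ?thesis by auto
qed

lemma spectral_decomposition_carrier:
  assumes "spectral_decomposition n M U d"
  shows "M \<in> carrier_mat n n"
  using assms isometric_embedding_carrier[of n n U] unfolding spectral_decomposition_def by auto

lemma spectral_decomposition_diag:
  assumes M: "spectral_decomposition n M U d"
  shows "transpose_mat U * M * U = mat_diag n d"
proof -
  have U: "isometric_embedding n n U" and M_eq: "M = U * mat_diag n d * transpose_mat U"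
    using M unfolding spectral_decomposition_def by auto
  show ?thesis
    by (rule iffD1[OF isometry_conjugation_eq_iff[OF U spectral_decomposition_carrier[OF M] mat_diag_dim]
          M_eq])
qed

lemma spectral_decompositionI:
  assumes U: "isometric_embedding n n U" and M: "M \<in> carrier_mat n n"
    and diag: "transpose_mat U * M * U = mat_diag n d"
  shows "spectral_decomposition n M U d"
  unfolding spectral_decomposition_def
  using U iffD2[OF isometry_conjugation_eq_iff[OF U M mat_diag_dim] diag] by blast

lemma char_poly_spectral_decomposition:
  assumes M: "spectral_decomposition n M U d"
  shows "char_poly M = (\<Prod>a\<leftarrow>map d [0..<n]. [:- a, 1:])"
proof -
  have U: "isometric_embedding n n U" using M unfolding spectral_decomposition_def by simp
  have "char_poly M = char_poly (transpose_mat U * M * U)"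
    by (rule char_poly_isometry_congruence[OF U spectral_decomposition_carrier[OF M], symmetric])
  also have "\<dots> = char_poly (mat_diag n d)" unfolding spectral_decomposition_diag[OF M] ..
  finally show ?thesis unfolding char_poly_mat_diag .
qed

lemma block_diag_congruence:
  fixes V M' :: "real mat"
  assumes V: "V \<in> carrier_mat m m" and M': "M' \<in> carrier_mat m m"
  defines "W \<equiv> four_block_mat (1\<^sub>m 1) (0\<^sub>m 1 m) (0\<^sub>m m 1) V"
  shows "transpose_mat W * four_block_mat (mat 1 1 (\<lambda>_. l)) (0\<^sub>m 1 m) (0\<^sub>m m 1) M' * W
    = four_block_mat (mat 1 1 (\<lambda>_. l)) (0\<^sub>m 1 m) (0\<^sub>m m 1) (transpose_mat V * M' * V)"
proof -
  have Vt: "transpose_mat V \<in> carrier_mat m m" and VtM': "transpose_mat V * M' \<in> carrier_mat m m"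
    using V M' by auto
  have c1: "1\<^sub>m 1 \<in> carrier_mat 1 1" and l1: "mat 1 1 (\<lambda>_. l) \<in> carrier_mat 1 1"
    and z1: "0\<^sub>m 1 m \<in> carrier_mat 1 m" and z2: "0\<^sub>m m 1 \<in> carrier_mat m 1" by auto
  have Wt: "transpose_mat W = four_block_mat (1\<^sub>m 1) (0\<^sub>m 1 m) (0\<^sub>m m 1) (transpose_mat V)"
    unfolding W_def using transpose_four_block_mat[OF c1 z1 z2 V] by simp
  have left: "transpose_mat W * four_block_mat (mat 1 1 (\<lambda>_. l)) (0\<^sub>m 1 m) (0\<^sub>m m 1) M'
      = four_block_mat (mat 1 1 (\<lambda>_. l)) (0\<^sub>m 1 m) (0\<^sub>m m 1) (transpose_mat V * M')"
    unfolding Wt by (subst mult_four_block_mat[OF c1 z1 z2 Vt l1 z1 z2 M']) (use Vt M' in simp)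
  show ?thesis
    unfolding left unfolding W_def
    by (subst mult_four_block_mat[OF l1 z1 z2 VtM' c1 z1 z2 V])
      (use V VtM' in \<open>simp add: right_mult_zero_mat[OF VtM']\<close>)
qed

lemma mono_on_case_nat:
  fixes d :: "nat \<Rightarrow> 'a :: order"
  assumes mono: "mono_on {..<m} d" and le: "\<And>i. i < m \<Longrightarrow> l \<le> d i"
  shows "mono_on {..<Suc m} (case_nat l d)"
proof (rule mono_onI)
  fix r s assume "r \<in> {..<Suc m}" "s \<in> {..<Suc m}" "r \<le> s"
  then show "case_nat l d r \<le> case_nat l d s"
    using le mono_onD[OF mono] by (cases r; cases s) auto
qed

theorem real_symmetric_spectral_decomposition:
  fixes M :: "real mat"
  assumes "M \<in> carrier_mat n n" and "transpose_mat M = M"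
  shows "\<exists>U d. spectral_decomposition n M U d \<and> mono_on {..<n} d"
  using assms
proof (induction n arbitrary: M)
  case 0
  have "spectral_decomposition 0 M (1\<^sub>m 0) (\<lambda>_. 0)"
  proof (rule spectral_decompositionI)
    show "isometric_embedding 0 0 (1\<^sub>m 0)" unfolding isometric_embedding_def by simp
    show "transpose_mat (1\<^sub>m 0) * M * 1\<^sub>m 0 = mat_diag 0 (\<lambda>_. 0)"
      using 0 by (intro eq_matI) (auto simp: mat_diag_def)
  qed (use 0 in simp)
  moreover have "mono_on {..<0} (\<lambda>_. 0 :: real)" by (rule mono_onI) simp
  ultimately show ?case by blast
next
  case (Suc m M)
  have M: "M \<in> carrier_mat (Suc m) (Suc m)" and symM: "transpose_mat M = M" using Suc.prems by auto
  \<comment> \<open>Split off the smallest eigenvalue; this makes the eigenvalues come out sorted.\<close>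
  obtain u l0 where u: "u \<in> carrier_vec (Suc m)" and uu: "u \<bullet> u = 1" and Mu: "M *\<^sub>v u = l0 \<cdot>\<^sub>v u"
    and l0_min: "\<And>x. poly (char_poly M) x = 0 \<Longrightarrow> l0 \<le> x"
    using real_symmetric_min_unit_eigenvector[OF M symM zero_less_Suc] by blast
  obtain U0 M' where U0: "isometric_embedding (Suc m) (Suc m) U0" and M': "M' \<in> carrier_mat m m"
    and symM': "transpose_mat M' = M'"
    and T: "transpose_mat U0 * M * U0 = four_block_mat (mat 1 1 (\<lambda>_. l0)) (0\<^sub>m 1 m) (0\<^sub>m m 1) M'"
    using symmetric_deflation[OF M symM u uu Mu] by blast
  obtain V d' where V: "spectral_decomposition m M' V d'" and mono': "mono_on {..<m} d'"
    using Suc.IH[OF M' symM'] by blast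
  have Vi: "isometric_embedding m m V" using V unfolding spectral_decomposition_def by simp
  define W where "W = four_block_mat (1\<^sub>m 1) (0\<^sub>m 1 m) (0\<^sub>m m 1) V"
  have W: "isometric_embedding (Suc m) (Suc m) W"
    unfolding W_def by (rule isometric_embedding_four_block[OF Vi])
  have U0c: "U0 \<in> carrier_mat (Suc m) (Suc m)" and Wc: "W \<in> carrier_mat (Suc m) (Suc m)"
    using U0 W by (auto dest: isometric_embedding_carrier)
  have "transpose_mat (U0 * W) * M * (U0 * W) = transpose_mat W * (transpose_mat U0 * M * U0) * W"
    using U0c Wc M by (simp add: transpose_mult[OF U0c Wc] assoc_mult_mat[of _ "Suc m" "Suc m" _ "Suc m" _ "Suc m"])
  also have "\<dots> = mat_diag (Suc m) (case_nat l0 d')"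
    unfolding T W_def block_diag_congruence[OF isometric_embedding_carrier[OF Vi] M']
      spectral_decomposition_diag[OF V] mat_diag_Suc ..
  finally have "spectral_decomposition (Suc m) M (U0 * W) (case_nat l0 d')"
    by (rule spectral_decompositionI[OF isometric_embedding_mult[OF U0 W] M])
  moreover have l0_le: "l0 \<le> d' i" if i: "i < m" for i
  proof -
    have "char_poly M = char_poly (mat 1 1 (\<lambda>_. l0)) * char_poly M'"
      using char_poly_isometry_congruence[OF U0 M]
        char_poly_four_block_zeros_col[of "mat 1 1 (\<lambda>_. l0)" "0\<^sub>m 1 m" m M'] M'
      unfolding T by auto
    moreover have "poly (char_poly M') (d' i) = 0"
      unfolding char_poly_spectral_decomposition[OF V] poly_prod_list
      by (subst prod_list_zero_iff) (use i in auto)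
    ultimately show ?thesis by (intro l0_min) simp
  qed
  ultimately show ?case using mono_on_case_nat[OF mono' l0_le] by blast
qed

lemma spectral_decomposition_eigenvector:
  assumes M: "spectral_decomposition n M U d" and i: "i < n"
  shows "eigenvector M (col U i) (d i)"
proof -
  have U: "isometric_embedding n n U" and M_eq: "M = U * mat_diag n d * transpose_mat U"
    using M unfolding spectral_decomposition_def by auto
  have Uc: "U \<in> carrier_mat n n" by (rule isometric_embedding_carrier[OF U])
  have cu: "col U i \<in> carrier_vec n" using Uc i by simp
  have "transpose_mat U *\<^sub>v col U i = unit_vec n i"
    using isometric_embedding_transpose_mult_vec_cancel[OF U, of "unit_vec n i"]
      mult_mat_vec_unit_vec[OF Uc i] by simp
  moreover have "mat_diag n d *\<^sub>v unit_vec n i = d i \<cdot>\<^sub>v unit_vec n i"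
    by (rule eq_vecI) (auto simp: mat_diag_mult_vec unit_vec_def)
  ultimately have "M *\<^sub>v col U i = U *\<^sub>v (d i \<cdot>\<^sub>v unit_vec n i)"
    unfolding M_eq using Uc cu by (simp add: assoc_mult_mat_vec[of _ n n _ n])
  also have "\<dots> = d i \<cdot>\<^sub>v col U i"
    using mult_mat_vec[OF Uc, of "unit_vec n i"] mult_mat_vec_unit_vec[OF Uc i] by simp
  finally have "M *\<^sub>v col U i = d i \<cdot>\<^sub>v col U i" .
  moreover have "col U i \<noteq> 0\<^sub>v n"
    using isometric_embedding_col_inner[OF U i] cu by auto
  ultimately show ?thesis
    unfolding eigenvector_def using cu M_eq Uc by simp
qed

lemma spectral_decomposition_quadratic_form:
  assumes M: "spectral_decomposition n M U d" and x: "x \<in> carrier_vec n"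
  shows "x \<bullet> (M *\<^sub>v x) = (\<Sum>i<n. d i * ((transpose_mat U *\<^sub>v x) $ i)\<^sup>2)"
    and "x \<bullet> x = (\<Sum>i<n. ((transpose_mat U *\<^sub>v x) $ i)\<^sup>2)"
proof -
  have U: "isometric_embedding n n U" and M_eq: "M = U * mat_diag n d * transpose_mat U"
    using M unfolding spectral_decomposition_def by auto
  have Uc: "U \<in> carrier_mat n n" by (rule isometric_embedding_carrier[OF U])
  define c where "c = transpose_mat U *\<^sub>v x"
  have c: "c \<in> carrier_vec n" using Uc x by (simp add: c_def)
  have "x \<bullet> (M *\<^sub>v x) = c \<bullet> (mat_diag n d *\<^sub>v c)"
    using quadratic_form_congruence[of "mat_diag n d" n "transpose_mat U" n x] Uc x
    unfolding M_eq c_def by simp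
  also have "\<dots> = (\<Sum>i<n. d i * (c $ i)\<^sup>2)" by (rule quadratic_form_mat_diag[OF c])
  finally show "x \<bullet> (M *\<^sub>v x) = (\<Sum>i<n. d i * ((transpose_mat U *\<^sub>v x) $ i)\<^sup>2)"
    unfolding c_def .
  have "x \<bullet> x = c \<bullet> c"
    using isometric_embedding_inner[OF isometric_embedding_transpose[OF U] x x] by (simp add: c_def)
  also have "\<dots> = (\<Sum>i<n. (c $ i)\<^sup>2)"
    using c by (simp add: scalar_prod_def power2_eq_square atLeast0LessThan)
  finally show "x \<bullet> x = (\<Sum>i<n. ((transpose_mat U *\<^sub>v x) $ i)\<^sup>2)" unfolding c_def .
qed

section \<open>Ordered eigenvalues and Weyl's monotonicity principle\<close>

lemma proots_prod_linear: "proots (\<Prod>a\<leftarrow>xs. [:- (a :: real), 1:]) = mset xs"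
proof (induction xs)
  case (Cons a xs)
  have "(\<Prod>a\<leftarrow>xs. [:- a, 1:]) \<noteq> 0" by (subst prod_list_zero_iff) auto
  then have "proots ([:- a, 1:] * (\<Prod>a\<leftarrow>xs. [:- a, 1:]))
      = proots [:- a, 1:] + proots (\<Prod>a\<leftarrow>xs. [:- a, 1:])"
    by (intro proots_mult) auto
  then show ?case using Cons by simp
qed simp

lemma eig_asc_spectral_decomposition:
  assumes M: "spectral_decomposition n M U d" and mono: "mono_on {..<n} d"
    and j: "1 \<le> j" "j \<le> n"
  shows "eig_asc M j = d (j - 1)"
proof -
  have "sorted (map d [0..<n])"
    unfolding sorted_iff_nth_mono by (auto intro: mono_onD[OF mono])
  then have "sorted_list_of_multiset (proots (char_poly M)) = map d [0..<n]"
    unfolding char_poly_spectral_decomposition[OF M] proots_prod_linear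
    by (simp only: sorted_list_of_multiset_mset sorted_sort_id)
  then show ?thesis using j unfolding eig_asc_def by simp
qed

lemma spectral_decomposition_quadratic_form_ge:
  assumes M: "spectral_decomposition n M U d" and mono: "mono_on {..<n} d" and i: "i < n"
    and x: "x \<in> carrier_vec n" and perp: "\<And>l. l < i \<Longrightarrow> (transpose_mat U *\<^sub>v x) $ l = 0"
  shows "d i * (x \<bullet> x) \<le> x \<bullet> (M *\<^sub>v x)"
proof -
  have "d i * (x \<bullet> x) = (\<Sum>l<n. d i * ((transpose_mat U *\<^sub>v x) $ l)\<^sup>2)"
    unfolding spectral_decomposition_quadratic_form(2)[OF M x] by (simp add: sum_distrib_left)
  also have "\<dots> \<le> (\<Sum>l<n. d l * ((transpose_mat U *\<^sub>v x) $ l)\<^sup>2)"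
  proof (rule sum_mono)
    fix l assume "l \<in> {..<n}"
    then show "d i * ((transpose_mat U *\<^sub>v x) $ l)\<^sup>2 \<le> d l * ((transpose_mat U *\<^sub>v x) $ l)\<^sup>2"
      using perp[of l] mono_onD[OF mono, of i l] i by (cases "l < i") (auto intro: mult_right_mono)
  qed
  also have "\<dots> = x \<bullet> (M *\<^sub>v x)" by (rule spectral_decomposition_quadratic_form(1)[OF M x, symmetric])
  finally show ?thesis .
qed

lemma spectral_decomposition_quadratic_form_le:
  assumes M: "spectral_decomposition n M U d" and mono: "mono_on {..<n} d" and i: "i < n"
    and x: "x \<in> carrier_vec n" and perp: "\<And>l. i < l \<Longrightarrow> l < n \<Longrightarrow> (transpose_mat U *\<^sub>v x) $ l = 0"
  shows "x \<bullet> (M *\<^sub>v x) \<le> d i * (x \<bullet> x)"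
proof -
  have "x \<bullet> (M *\<^sub>v x) = (\<Sum>l<n. d l * ((transpose_mat U *\<^sub>v x) $ l)\<^sup>2)"
    by (rule spectral_decomposition_quadratic_form(1)[OF M x])
  also have "\<dots> \<le> (\<Sum>l<n. d i * ((transpose_mat U *\<^sub>v x) $ l)\<^sup>2)"
  proof (rule sum_mono)
    fix l assume "l \<in> {..<n}"
    then show "d l * ((transpose_mat U *\<^sub>v x) $ l)\<^sup>2 \<le> d i * ((transpose_mat U *\<^sub>v x) $ l)\<^sup>2"
      using perp[of l] mono_onD[OF mono, of l i] i by (cases "i < l") (auto intro: mult_right_mono)
  qed
  also have "\<dots> = d i * (x \<bullet> x)"
    unfolding spectral_decomposition_quadratic_form(2)[OF M x] by (simp add: sum_distrib_left)
  finally show ?thesis .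
qed

text \<open>A dimension count: the orthogonal complement of the first \<open>i\<close> columns of \<open>U\<close> has
  dimension \<open>n - i\<close>, the span of the first \<open>i + 1\<close> columns of \<open>V\<close> has dimension \<open>i + 1\<close>.\<close>

lemma orthogonal_complement_meets_span:
  fixes U V :: "real mat"
  assumes U: "U \<in> carrier_mat n n" and V: "isometric_embedding n n V" and i: "i < n"
  shows "\<exists>x \<in> carrier_vec n. x \<noteq> 0\<^sub>v n \<and> (\<forall>l<i. (transpose_mat U *\<^sub>v x) $ l = 0)
    \<and> (\<forall>l. i < l \<longrightarrow> l < n \<longrightarrow> (transpose_mat V *\<^sub>v x) $ l = 0)"
proof -
  have Vc: "V \<in> carrier_mat n n" by (rule isometric_embedding_carrier[OF V])
  define G where "G = transpose_mat U * V"
  have G: "G \<in> carrier_mat n n" using U Vc by (auto simp: G_def)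
  \<comment> \<open>Rows \<open>m > i\<close> of \<open>E b = 0\<close> force \<open>b $ m = 0\<close>, and then rows \<open>l < i\<close> say \<open>(G b) $ l = 0\<close>;
    row \<open>i\<close> of \<open>E\<close> is zero, so \<open>E\<close> is singular.\<close>
  define E where "E = mat n n (\<lambda>(l, m). if l < i then (if m \<le> i then G $$ (l, m) else 0)
    else if l = i then 0 else if m = l then 1 else 0)"
  have E: "E \<in> carrier_mat n n" by (simp add: E_def)
  have "E = mat\<^sub>r n n (\<lambda>l. if l = i then 0\<^sub>v n else row E l)"
    by (rule eq_matI) (auto simp: E_def)
  then have "det E = 0" using det_row_0[OF i, of "\<lambda>l. row E l"] E by auto
  then obtain b where b: "b \<in> carrier_vec n" and b0: "b \<noteq> 0\<^sub>v n" and Eb: "E *\<^sub>v b = 0\<^sub>v n"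
    using det_0_iff_vec_prod_zero_field[OF E] by auto
  have Eb_row: "(\<Sum>m\<in>{0..<n}. E $$ (l, m) * b $ m) = 0" if "l < n" for l
    using arg_cong[OF Eb, of "\<lambda>w. w $ l"] that E b
    by (simp add: mult_mat_vec_def scalar_prod_def row_def)
  have b_high: "b $ m = 0" if "i < m" "m < n" for m
  proof -
    have "(\<Sum>m'\<in>{0..<n}. E $$ (m, m') * b $ m') = (\<Sum>m'\<in>{0..<n}. if m' = m then b $ m' else 0)"
      by (rule sum.cong) (use that in \<open>auto simp: E_def\<close>)
    then show ?thesis using Eb_row[of m] that by simp
  qed
  define x where "x = V *\<^sub>v b"
  have x: "x \<in> carrier_vec n" using Vc b by (simp add: x_def)
  have Vtx: "transpose_mat V *\<^sub>v x = b"
    unfolding x_def by (rule isometric_embedding_transpose_mult_vec_cancel[OF V b])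
  have "x \<bullet> x = b \<bullet> b" unfolding x_def by (rule isometric_embedding_inner[OF V b b])
  then have "x \<noteq> 0\<^sub>v n"
    using b0 real_scalar_prod_self_gt_0_iff[OF b] real_scalar_prod_self_gt_0_iff[OF x] by simp
  moreover have "(transpose_mat U *\<^sub>v x) $ l = 0" if l: "l < i" for l
  proof -
    have "(transpose_mat U *\<^sub>v x) $ l = (G *\<^sub>v b) $ l"
      unfolding x_def G_def using U Vc b by (simp add: assoc_mult_mat_vec[of _ n n _ n])
    also have "\<dots> = (\<Sum>m\<in>{0..<n}. E $$ (l, m) * b $ m)"
      using l i G b b_high by (auto simp: E_def mult_mat_vec_def scalar_prod_def intro!: sum.cong)
    also have "\<dots> = 0" using Eb_row l i by simp
    finally show ?thesis .
  qed
  ultimately show ?thesis using x Vtx b_high by auto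
qed

definition loewner_le :: "nat \<Rightarrow> real mat \<Rightarrow> real mat \<Rightarrow> bool" where
  "loewner_le n F G \<longleftrightarrow> (\<forall>x \<in> carrier_vec n. x \<bullet> (F *\<^sub>v x) \<le> x \<bullet> (G *\<^sub>v x))"

theorem eig_asc_mono:
  fixes F G :: "real mat"
  assumes F: "F \<in> carrier_mat n n" "transpose_mat F = F"
    and G: "G \<in> carrier_mat n n" "transpose_mat G = G"
    and FG: "loewner_le n F G" and j: "1 \<le> j" "j \<le> n"
  shows "eig_asc F j \<le> eig_asc G j"
proof -
  obtain U d where F_sd: "spectral_decomposition n F U d" and d: "mono_on {..<n} d"
    using real_symmetric_spectral_decomposition[OF F] by blast
  obtain V e where G_sd: "spectral_decomposition n G V e" and e: "mono_on {..<n} e"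
    using real_symmetric_spectral_decomposition[OF G] by blast
  have U: "isometric_embedding n n U" and V: "isometric_embedding n n V"
    using F_sd G_sd unfolding spectral_decomposition_def by auto
  define i where "i = j - 1"
  have i: "i < n" using j by (simp add: i_def)
  obtain x where x: "x \<in> carrier_vec n" "x \<noteq> 0\<^sub>v n"
    and perp_U: "\<forall>l<i. (transpose_mat U *\<^sub>v x) $ l = 0"
    and perp_V: "\<forall>l. i < l \<longrightarrow> l < n \<longrightarrow> (transpose_mat V *\<^sub>v x) $ l = 0"
    using orthogonal_complement_meets_span[OF isometric_embedding_carrier[OF U] V i] by blast
  have "d i * (x \<bullet> x) \<le> x \<bullet> (F *\<^sub>v x)"
    using spectral_decomposition_quadratic_form_ge[OF F_sd d i x(1)] perp_U by blast
  also have "\<dots> \<le> x \<bullet> (G *\<^sub>v x)" using FG x unfolding loewner_le_def by blast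
  also have "\<dots> \<le> e i * (x \<bullet> x)"
    using spectral_decomposition_quadratic_form_le[OF G_sd e i x(1)] perp_V by blast
  finally have "d i \<le> e i" using x real_scalar_prod_self_gt_0_iff[OF x(1)] by simp
  then show ?thesis
    using eig_asc_spectral_decomposition[OF F_sd d j] eig_asc_spectral_decomposition[OF G_sd e j]
    by (simp add: i_def)
qed

lemma loewner_le_congruence:
  fixes F G R :: "real mat"
  assumes FG: "loewner_le n F G" and F: "F \<in> carrier_mat n n" and G: "G \<in> carrier_mat n n"
    and R: "R \<in> carrier_mat n k"
  shows "loewner_le k (transpose_mat R * F * R) (transpose_mat R * G * R)"
  unfolding loewner_le_def
proof
  fix x :: "real vec" assume x: "x \<in> carrier_vec k"
  have "R *\<^sub>v x \<in> carrier_vec n" using R x by simp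
  then show "x \<bullet> ((transpose_mat R * F * R) *\<^sub>v x) \<le> x \<bullet> ((transpose_mat R * G * R) *\<^sub>v x)"
    using FG unfolding loewner_le_def quadratic_form_congruence[OF F R x]
      quadratic_form_congruence[OF G R x] by blast
qed

lemma eig_asc_congruence_mono:
  fixes F G R :: "real mat"
  assumes F: "F \<in> carrier_mat k k" "transpose_mat F = F"
    and G: "G \<in> carrier_mat k k" "transpose_mat G = G"
    and FG: "loewner_le k F G" and R: "R \<in> carrier_mat k k" and j: "1 \<le> j" "j \<le> k"
  shows "eig_asc (transpose_mat R * F * R) j \<le> eig_asc (transpose_mat R * G * R) j"
proof (rule eig_asc_mono[OF _ _ _ _ loewner_le_congruence[OF FG F(1) G(1) R] j])
  show "transpose_mat (transpose_mat R * F * R) = transpose_mat R * F * R"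
    and "transpose_mat (transpose_mat R * G * R) = transpose_mat R * G * R"
    using transpose_congruence[OF F(1) R] transpose_congruence[OF G(1) R] F(2) G(2) by simp_all
qed (use F G R in auto)

section \<open>Real powers of positive definite matrices\<close>

lemma spectral_decomposition_function_eigenvector:
  assumes M: "spectral_decomposition n M U d" and ev: "eigenvector M v \<mu>"
  shows "(U * mat_diag n (\<lambda>i. f (d i)) * transpose_mat U) *\<^sub>v v = f \<mu> \<cdot>\<^sub>v v"
proof -
  have U: "isometric_embedding n n U" and M_eq: "M = U * mat_diag n d * transpose_mat U"
    using M unfolding spectral_decomposition_def by auto
  have Uc: "U \<in> carrier_mat n n" by (rule isometric_embedding_carrier[OF U])
  have v: "v \<in> carrier_vec n" and Mv: "M *\<^sub>v v = \<mu> \<cdot>\<^sub>v v"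
    using ev Uc unfolding eigenvector_def M_eq by auto
  define c where "c = transpose_mat U *\<^sub>v v"
  have c: "c \<in> carrier_vec n" using Uc v by (simp add: c_def)
  have Dc: "mat_diag n d *\<^sub>v c \<in> carrier_vec n" by (rule mult_mat_vec_carrier[OF mat_diag_dim c])
  have Mv': "M *\<^sub>v v = U *\<^sub>v (mat_diag n d *\<^sub>v c)"
    unfolding M_eq c_def using Uc v by (simp add: assoc_mult_mat_vec[of _ n n _ n])
  have "mat_diag n d *\<^sub>v c = transpose_mat U *\<^sub>v (M *\<^sub>v v)"
    unfolding Mv' by (rule isometric_embedding_transpose_mult_vec_cancel[OF U Dc, symmetric])
  also have "\<dots> = \<mu> \<cdot>\<^sub>v c" unfolding Mv c_def using Uc v by (simp add: mult_mat_vec)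
  finally have Dc_eq: "mat_diag n d *\<^sub>v c = \<mu> \<cdot>\<^sub>v c" .
  have "f (d i) * c $ i = f \<mu> * c $ i" if i: "i < n" for i
  proof (cases "c $ i = 0")
    case False
    then have "d i = \<mu>"
      using arg_cong[OF Dc_eq, of "\<lambda>w. w $ i"] c i by (simp add: mat_diag_mult_vec)
    then show ?thesis by simp
  qed simp
  then have "mat_diag n (\<lambda>i. f (d i)) *\<^sub>v c = f \<mu> \<cdot>\<^sub>v c"
    using c by (auto intro!: eq_vecI simp: mat_diag_mult_vec)
  then have "(U * mat_diag n (\<lambda>i. f (d i)) * transpose_mat U) *\<^sub>v v = U *\<^sub>v (f \<mu> \<cdot>\<^sub>v c)"
    unfolding c_def using Uc v by (simp add: assoc_mult_mat_vec[of _ n n _ n])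
  also have "\<dots> = f \<mu> \<cdot>\<^sub>v v"
    using mult_mat_vec[OF Uc c] isometry_mult_transpose_vec_cancel[OF U v] by (simp add: c_def)
  finally show ?thesis .
qed

lemma mat_rpow_spectral_decomposition:
  assumes M: "spectral_decomposition n M U d"
  shows "mat_rpow M a = U * mat_diag n (\<lambda>i. d i powr a) * transpose_mat U"
proof -
  have U: "isometric_embedding n n U" using M unfolding spectral_decomposition_def by simp
  have Uc: "U \<in> carrier_mat n n" by (rule isometric_embedding_carrier[OF U])
  have dimM: "dim_row M = n" using spectral_decomposition_carrier[OF M] by simp
  define X where "X = U * mat_diag n (\<lambda>i. d i powr a) * transpose_mat U"
  have X: "X \<in> carrier_mat n n" using Uc by (auto simp: X_def)
  have X_ev: "\<forall>v \<mu>. eigenvector M v \<mu> \<longrightarrow> X *\<^sub>v v = \<mu> powr a \<cdot>\<^sub>v v"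
    using spectral_decomposition_function_eigenvector[OF M, of _ _ "\<lambda>t. t powr a"] by (simp add: X_def)
  \<comment> \<open>The eigenvector condition pins a matrix down on the orthonormal basis of columns of \<open>U\<close>.\<close>
  have uniq: "Y = X" if Y: "Y \<in> carrier_mat n n" and Y_ev: "\<forall>v \<mu>. eigenvector M v \<mu> \<longrightarrow> Y *\<^sub>v v = \<mu> powr a \<cdot>\<^sub>v v"
    for Y
  proof -
    have "Y * U = X * U"
    proof (rule mat_col_eqI)
      fix i assume "i < dim_col (X * U)"
      then have i: "i < n" using X Uc by simp
      have ev: "eigenvector M (col U i) (d i)" by (rule spectral_decomposition_eigenvector[OF M i])
      have "col (Y * U) i = Y *\<^sub>v col U i" by (rule col_mult2[OF Y Uc i])
      also have "\<dots> = X *\<^sub>v col U i"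
        using Y_ev[rule_format, OF ev] X_ev[rule_format, OF ev] by (simp only:)
      also have "\<dots> = col (X * U) i" by (rule col_mult2[OF X Uc i, symmetric])
      finally show "col (Y * U) i = col (X * U) i" .
    qed (use X Y Uc in auto)
    then have "Y * U * transpose_mat U = X * U * transpose_mat U" by simp
    then show ?thesis
      using Y X Uc isometric_embedding_mult_transpose[OF U] by (simp add: assoc_mult_mat[of _ n n _ n _ n])
  qed
  have "mat_rpow M a = X"
    unfolding mat_rpow_def dimM
    by (rule the_equality) (use X X_ev uniq in blast)+
  then show ?thesis unfolding X_def .
qed

lemma spd_carrier: "spd n M \<Longrightarrow> M \<in> carrier_mat n n"
  unfolding spd_def by simp

lemma spd_transpose: "spd n M \<Longrightarrow> transpose_mat M = M"
  unfolding spd_def by simp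

lemma spd_spectral_decomposition:
  assumes spdM: "spd n M"
  shows "\<exists>U d. spectral_decomposition n M U d \<and> (\<forall>i<n. 0 < d i)"
proof -
  obtain U d where M: "spectral_decomposition n M U d"
    using real_symmetric_spectral_decomposition[OF spd_carrier[OF spdM] spd_transpose[OF spdM]] by blast
  have U: "isometric_embedding n n U" using M unfolding spectral_decomposition_def by simp
  have "0 < d i" if i: "i < n" for i
  proof -
    have "eigenvector M (col U i) (d i)" by (rule spectral_decomposition_eigenvector[OF M i])
    then have cu: "col U i \<in> carrier_vec n" "col U i \<noteq> 0\<^sub>v n" and Mu: "M *\<^sub>v col U i = d i \<cdot>\<^sub>v col U i"
      unfolding eigenvector_def using spd_carrier[OF spdM] by auto
    have "0 < col U i \<bullet> (M *\<^sub>v col U i)" using spdM cu unfolding spd_def by blast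
    also have "\<dots> = d i" unfolding Mu using isometric_embedding_col_inner[OF U i] cu by simp
    finally show ?thesis .
  qed
  with M show ?thesis by blast
qed

lemma spectral_decomposition_spd:
  assumes M: "spectral_decomposition n M U d" and pos: "\<And>i. i < n \<Longrightarrow> 0 < d i"
  shows "spd n M"
proof -
  have U: "isometric_embedding n n U" and M_eq: "M = U * mat_diag n d * transpose_mat U"
    using M unfolding spectral_decomposition_def by auto
  have Uc: "U \<in> carrier_mat n n" by (rule isometric_embedding_carrier[OF U])
  have "transpose_mat M = M"
    using transpose_congruence[of "mat_diag n d" n "transpose_mat U" n] Uc unfolding M_eq by simp
  moreover have "0 < x \<bullet> (M *\<^sub>v x)" if x: "x \<in> carrier_vec n" and x0: "x \<noteq> 0\<^sub>v n" for x
  proof -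
    define c where "c = transpose_mat U *\<^sub>v x"
    have xx: "x \<bullet> x = (\<Sum>i<n. (c $ i)\<^sup>2)"
      unfolding c_def by (rule spectral_decomposition_quadratic_form(2)[OF M x])
    have "\<exists>i<n. c $ i \<noteq> 0"
    proof (rule ccontr)
      assume "\<not> ?thesis"
      then have "x \<bullet> x = 0" unfolding xx by simp
      then show False using x x0 real_scalar_prod_self_gt_0_iff by fastforce
    qed
    then obtain i where i: "i < n" and ci: "c $ i \<noteq> 0" by blast
    have "0 < d i * (c $ i)\<^sup>2" using pos[OF i] ci by simp
    also have "\<dots> \<le> (\<Sum>l<n. d l * (c $ l)\<^sup>2)"
    proof (rule member_le_sum)
      show "0 \<le> d l * (c $ l)\<^sup>2" if "l \<in> {..<n} - {i}" for l
        using that mult_nonneg_nonneg[OF less_imp_le[OF pos] zero_le_power2] by simp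
    qed (use i in auto)
    also have "\<dots> = x \<bullet> (M *\<^sub>v x)"
      unfolding spectral_decomposition_quadratic_form(1)[OF M x] c_def ..
    finally show ?thesis .
  qed
  ultimately show ?thesis unfolding spd_def using spectral_decomposition_carrier[OF M] by blast
qed

lemma spd_mat_rpow:
  assumes "spd n M"
  shows "spd n (mat_rpow M a)"
proof -
  obtain U d where M: "spectral_decomposition n M U d" and pos: "\<forall>i<n. 0 < d i"
    using spd_spectral_decomposition[OF assms] by blast
  have "spectral_decomposition n (mat_rpow M a) U (\<lambda>i. d i powr a)"
    using M unfolding mat_rpow_spectral_decomposition[OF M] spectral_decomposition_def by simp
  then show ?thesis using pos by (intro spectral_decomposition_spd) auto
qed

lemma mat_rpow_add:
  assumes "spd n M"
  shows "mat_rpow M a * mat_rpow M b = mat_rpow M (a + b)"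
proof -
  obtain U d where M: "spectral_decomposition n M U d"
    using spd_spectral_decomposition[OF assms] by blast
  have U: "isometric_embedding n n U" using M unfolding spectral_decomposition_def by simp
  have Uc: "U \<in> carrier_mat n n" by (rule isometric_embedding_carrier[OF U])
  have "mat_rpow M a * mat_rpow M b
      = U * (mat_diag n (\<lambda>i. d i powr a) * mat_diag n (\<lambda>i. d i powr b)) * transpose_mat U"
    unfolding mat_rpow_spectral_decomposition[OF M] using Uc U
      isometric_embedding_transpose_mult_cancel[of n n U "mat_diag n (\<lambda>i. d i powr b) * transpose_mat U" n]
    by (simp add: assoc_mult_mat[of _ n n _ n _ n] mult_carrier_mat[of _ n n] del: mat_diag_diag)
  also have "\<dots> = mat_rpow M (a + b)"
    unfolding mat_rpow_spectral_decomposition[OF M] by (simp add: powr_add)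
  finally show ?thesis .
qed

lemma mat_rpow_one:
  assumes "spd n M"
  shows "mat_rpow M 1 = M"
proof -
  obtain U d where M: "spectral_decomposition n M U d" and pos: "\<forall>i<n. 0 < d i"
    using spd_spectral_decomposition[OF assms] by blast
  have "mat_diag n (\<lambda>i. d i powr 1) = mat_diag n d"
    using pos by (intro mat_diag_cong) (simp add: less_imp_le)
  then show ?thesis using M unfolding mat_rpow_spectral_decomposition[OF M] spectral_decomposition_def
    by simp
qed

lemma mat_rpow_zero:
  assumes "spd n M"
  shows "mat_rpow M 0 = 1\<^sub>m n"
proof -
  obtain U d where M: "spectral_decomposition n M U d" and pos: "\<forall>i<n. 0 < d i"
    using spd_spectral_decomposition[OF assms] by blast
  have U: "isometric_embedding n n U" using M unfolding spectral_decomposition_def by simp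
  have "mat_diag n (\<lambda>i. d i powr 0) = mat_diag n (\<lambda>_. 1)"
    using pos by (intro mat_diag_cong) auto
  then have "mat_diag n (\<lambda>i. d i powr 0) = 1\<^sub>m n" by simp
  then show ?thesis
    unfolding mat_rpow_spectral_decomposition[OF M]
    using isometric_embedding_mult_transpose[OF U] isometric_embedding_carrier[OF U] by simp
qed

lemma spd_left_inverse:
  assumes "spd n M"
  shows "mat_rpow M (-1) * M = 1\<^sub>m n"
  using mat_rpow_add[OF assms, of "-1" 1] mat_rpow_one[OF assms] mat_rpow_zero[OF assms] by simp

lemma mat_rpow_half_mult_self:
  assumes "spd n M"
  shows "mat_rpow M (1/2) * mat_rpow M (1/2) = M"
  using mat_rpow_add[OF assms, of "1/2" "1/2"] mat_rpow_one[OF assms] by simp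

lemma char_poly_spd_sandwich:
  assumes spdC: "spd k C" and spdR: "spd k R"
  shows "char_poly (C * (R * R) * C) = char_poly (R * (C * C) * R)"
proof -
  have C: "C \<in> carrier_mat k k" and R: "R \<in> carrier_mat k k"
    using spdC spdR by (auto dest: spd_carrier)
  define C' where "C' = mat_rpow C (-1)"
  define R' where "R' = mat_rpow R (-1)"
  have C': "C' \<in> carrier_mat k k" "C' * C = 1\<^sub>m k"
    unfolding C'_def using spd_carrier[OF spd_mat_rpow[OF spdC]] spd_left_inverse[OF spdC] by auto
  have R': "R' \<in> carrier_mat k k" "R' * R = 1\<^sub>m k"
    unfolding R'_def using spd_carrier[OF spd_mat_rpow[OF spdR]] spd_left_inverse[OF spdR] by auto
  have "R' * C' * (C * R) = R' * (C' * C) * R"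
    using C R C'(1) R'(1) by (simp add: assoc_mult_mat[of _ k k _ k _ k])
  then have inv: "R' * C' * (C * R) = 1\<^sub>m k" using R R' C' by simp
  have "char_poly ((C * R) * (R * C)) = char_poly ((R * C) * (C * R))"
    by (rule char_poly_mult_commute[OF _ _ _ inv]) (use C R C' R' in auto)
  then show ?thesis using C R by (simp add: assoc_mult_mat[of _ k k _ k _ k])
qed

section \<open>Compressions\<close>

lemma spd_congruence:
  fixes X \<iota> :: "real mat"
  assumes X: "spd n X" and \<iota>: "isometric_embedding k n \<iota>"
  shows "spd k (transpose_mat \<iota> * X * \<iota>)"
proof -
  have Xc: "X \<in> carrier_mat n n" by (rule spd_carrier[OF X])
  have \<iota>c: "\<iota> \<in> carrier_mat n k" by (rule isometric_embedding_carrier[OF \<iota>])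
  have "0 < x \<bullet> ((transpose_mat \<iota> * X * \<iota>) *\<^sub>v x)" if x: "x \<in> carrier_vec k" "x \<noteq> 0\<^sub>v k" for x
  proof -
    have \<iota>x: "\<iota> *\<^sub>v x \<in> carrier_vec n" using \<iota>c x by simp
    have "(\<iota> *\<^sub>v x) \<bullet> (\<iota> *\<^sub>v x) = x \<bullet> x" by (rule isometric_embedding_inner[OF \<iota> x(1) x(1)])
    then have "\<iota> *\<^sub>v x \<noteq> 0\<^sub>v n"
      using x real_scalar_prod_self_gt_0_iff[OF \<iota>x] real_scalar_prod_self_gt_0_iff[OF x(1)] by simp
    then show ?thesis
      using X \<iota>x quadratic_form_congruence[OF Xc \<iota>c x(1)] unfolding spd_def by auto
  qed
  then show ?thesis
    unfolding spd_def using transpose_congruence[OF Xc \<iota>c] spd_transpose[OF X] Xc \<iota>c by auto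
qed

lemma compression_square_loewner_le:
  fixes P \<iota> :: "real mat"
  assumes P: "P \<in> carrier_mat n n" "transpose_mat P = P" and \<iota>: "isometric_embedding k n \<iota>"
  shows "loewner_le k ((transpose_mat \<iota> * P * \<iota>) * (transpose_mat \<iota> * P * \<iota>))
    (transpose_mat \<iota> * (P * P) * \<iota>)"
  unfolding loewner_le_def
proof
  fix x :: "real vec" assume x: "x \<in> carrier_vec k"
  have \<iota>c: "\<iota> \<in> carrier_mat n k" by (rule isometric_embedding_carrier[OF \<iota>])
  define C where "C = transpose_mat \<iota> * P * \<iota>"
  have C: "C \<in> carrier_mat k k" using P \<iota>c by (auto simp: C_def)
  have symC: "transpose_mat C = C" unfolding C_def transpose_congruence[OF P(1) \<iota>c] P(2) ..
  define y where "y = P *\<^sub>v (\<iota> *\<^sub>v x)"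
  have y: "y \<in> carrier_vec n" using P \<iota>c x by (simp add: y_def)
  have "x \<bullet> ((C * C) *\<^sub>v x) = (C *\<^sub>v x) \<bullet> (C *\<^sub>v x)"
    using quadratic_form_transpose_mult_self[OF C x] symC by simp
  also have "C *\<^sub>v x = transpose_mat \<iota> *\<^sub>v y"
    using P \<iota>c x by (simp add: C_def y_def assoc_mult_mat_vec[of _ k n _ k] assoc_mult_mat_vec[of _ k n _ n])
  also have "(transpose_mat \<iota> *\<^sub>v y) \<bullet> (transpose_mat \<iota> *\<^sub>v y) \<le> y \<bullet> y"
    by (rule isometric_embedding_transpose_norm_le[OF \<iota> y])
  also have "y \<bullet> y = x \<bullet> ((transpose_mat \<iota> * (P * P) * \<iota>) *\<^sub>v x)"
    using quadratic_form_congruence[of "P * P" n \<iota> k x] quadratic_form_transpose_mult_self[OF P(1), of "\<iota> *\<^sub>v x"]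
      P \<iota>c x by (simp add: y_def)
  finally show "x \<bullet> ((C * C) *\<^sub>v x) \<le> x \<bullet> ((transpose_mat \<iota> * (P * P) * \<iota>) *\<^sub>v x)" .
qed

theorem lemma3p1:
  fixes k n :: nat and A B \<iota> :: "real mat" and \<alpha> :: real and j :: nat
  assumes "k < n"
    and "spd k A" and "spd n B"
    and "isometric_embedding k n \<iota>"
    and "1 \<le> j" and "j \<le> k"
  shows "eig_asc (compressed_pow \<iota> B (\<alpha>/2) * A * compressed_pow \<iota> B (\<alpha>/2)) j
         \<le> eig_asc (mat_rpow (compressed_pow \<iota> B \<alpha>) (1/2) * A * mat_rpow (compressed_pow \<iota> B \<alpha>) (1/2)) j"
proof -
  define P where "P = mat_rpow B (\<alpha>/2)"
  define C where "C = compressed_pow \<iota> B (\<alpha>/2)"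
  define D where "D = compressed_pow \<iota> B \<alpha>"
  define R where "R = mat_rpow A (1/2)"
  define S where "S = mat_rpow D (1/2)"
  have spdP: "spd n P" unfolding P_def by (rule spd_mat_rpow[OF assms(3)])
  have C_eq: "C = transpose_mat \<iota> * P * \<iota>" and D_eq: "D = transpose_mat \<iota> * (P * P) * \<iota>"
    unfolding C_def D_def P_def compressed_pow_def mat_rpow_add[OF assms(3)] by simp_all
  have spdC: "spd k C" unfolding C_eq by (rule spd_congruence[OF spdP assms(4)])
  have spdD: "spd k D" unfolding D_def compressed_pow_def
    by (rule spd_congruence[OF spd_mat_rpow[OF assms(3)] assms(4)])
  have spdR: "spd k R" unfolding R_def by (rule spd_mat_rpow[OF assms(2)])
  have cpC: "char_poly (C * A * C) = char_poly (R * (C * C) * R)"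
    using char_poly_spd_sandwich[OF spdC spdR] unfolding R_def mat_rpow_half_mult_self[OF assms(2)] .
  have cpS: "char_poly (S * A * S) = char_poly (R * D * R)"
    using char_poly_spd_sandwich[OF spd_mat_rpow[OF spdD, of "1/2"] spdR]
    unfolding S_def R_def mat_rpow_half_mult_self[OF assms(2)] mat_rpow_half_mult_self[OF spdD] .
  have C: "C \<in> carrier_mat k k" "transpose_mat C = C" using spdC by (auto dest: spd_carrier spd_transpose)
  then have CC: "C * C \<in> carrier_mat k k" "transpose_mat (C * C) = C * C"
    using transpose_mult[of C k k C k] by auto
  have "loewner_le k (C * C) D"
    unfolding C_eq D_eq
    by (rule compression_square_loewner_le[OF spd_carrier[OF spdP] spd_transpose[OF spdP] assms(4)])
  then have "eig_asc (R * (C * C) * R) j \<le> eig_asc (R * D * R) j"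
    using eig_asc_congruence_mono[OF CC spd_carrier[OF spdD] spd_transpose[OF spdD] _
        spd_carrier[OF spdR] assms(5,6)] spd_transpose[OF spdR] by simp
  then show ?thesis
    unfolding C_def[symmetric] D_def[symmetric] S_def[symmetric] eig_asc_def cpC cpS .
qed

end
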